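(* Let $\mathcal{X}$ and $\mathcal{Y}$ be finite sets, let $\mathcal{M}\subseteq\mathcal{X}\times\mathcal{Y}$ be the set of actual matches, and let $\hat{\mathcal{M}}_H\subseteq\mathcal{X}\times\mathcal{Y}$ be a fixed set (matches identified by a holdout query algorithm, chosen independently of all samples below). Let $\mathcal{S}_{\mathcal{X}}$ and $\mathcal{S}'_{\mathcal{X}}$ be independent samples, each drawn uniformly at random without replacement from $\mathcal{X}$. Let $\hat{\mathcal{M}}\subseteq\mathcal{X}\times\mathcal{Y}$ be a set of identified matches (produced by a "complete" query algorithm) which may depend on $\mathcal{S}_{\mathcal{X}}$ but is independent of $\mathcal{S}'_{\mathcal{X}}$ given $\mathcal{S}_{\mathcal{X}}$ (i.e. it is a fixed set conditional on $\mathcal{S}_{\mathcal{X}}$). For $x\in\mathcal{X}$ let $\mathcal{M}(x)$, $\hat{\mathcal{M}}(x)$, $\hat{\mathcal{M}}_H(x)$ be the sets of pairs in $\mathcal{M}$, $\hat{\mathcal{M}}$, $\hat{\mathcal{M}}_H$ respectively whose first coordinate is $x$. Let $\mathcal{X}'=\{x\in\mathcal{X}:\mathcal{M}(x)\ne\emptyset\}$, and for $x\in\mathcal{X}'$ let $r_H(x)=|\hat{\mathcal{M}}_H(x)\cap\mathcal{M}(x)|/|\mathcal{M}(x)|$ and $r(x)=|\hat{\mathcal{M}}(x)\cap\mathcal{M}(x)|/|\mathcal{M}(x)|$; define the query recall $R=\frac{1}{|\mathcal{X}'|}\sum_{x\in\mathcal{X}'}r(x)$. Let $d_r(x)=\mathbf{1}\{\hat{\mathcal{M}}_H(x)\setminus\hat{\mathcal{M}}(x)\ne\emptyset\}$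 for $x\in\mathcal{X}$. Then for any $\delta>0$, with probability at least $1-3\delta$, $$R\ \ge\ p^-(\mathcal{X}',\mathcal{S}_{\mathcal{X}}\cap\mathcal{X}',r_H,0,1,\delta)-\frac{p^+(\mathcal{X},\mathcal{S}'_{\mathcal{X}},d_r,0,1,\delta)}{p^-(\mathcal{X},\mathcal{S}_{\mathcal{X}},\mathbf{1}_{\mathcal{X}'},0,1,\delta)}.$$
   Context: PAC bound rules: $p^+$ and $p^-$ are functions which, given a finite set $\mathcal{P}$ (population), a subset $\mathcal{S}\subseteq\mathcal{P}$, a function $f:\mathcal{P}\to\mathbb{R}$, reals $a\le b$ and $\delta>0$, return a real number, and satisfy the following: for every finite set $\mathcal{P}$ with $|\mathcal{P}|=n$, every sample size $s$, and every $f$ with $a\le f(x)\le b$ for all $x\in\mathcal{P}$, if $\mathcal{S}$ is a size-$s$ sample drawn uniformly at random without replacement from $\mathcal{P}$ and $\mu=\frac1n\sum_{x\in\mathcal{P}}f(x)$, then $\Pr\{\mu>p^+(\mathcal{P},\mathcal{S},f,a,b,\delta)\}\le\delta$ and $\Pr\{\mu<p^-(\mathcal{P},\mathcal{S},f,a,b,\delta)\}\le\delta$. $\mathbf{1}_{A}$ denotes the indicator function of a set $A$ and $\mathbf{1}\{\cdot\}$ the indicator of an event. *)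

theory Defs
  imports "HOL-Probability.Probability"
begin

text \<open>All size-s subsets of a population P (uniform sampling without replacement
 = uniform distribution on this set).\<close>
definition samples :: "'a set \<Rightarrow> nat \<Rightarrow> 'a set set" where
  "samples P s = {S. S \<subseteq> P \<and> card S = s}"

definition pop_mean :: "'a set \<Rightarrow> ('a \<Rightarrow> real) \<Rightarrow> real" where
  "pop_mean P f = (\<Sum>x\<in>P. f x) / real (card P)"

definition pac_upper ::
  "('a set \<Rightarrow> 'a set \<Rightarrow> ('a \<Rightarrow> real) \<Rightarrow> real \<Rightarrow> real \<Rightarrow> real \<Rightarrow> real) \<Rightarrow> bool" where
  "pac_upper p \<longleftrightarrow>
     (\<forall>P s f a b \<delta>. finite P \<and> s \<le> card P \<and> a \<le> b \<and> \<delta> > 0 \<and>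
        (\<forall>x\<in>P. a \<le> f x \<and> f x \<le> b) \<longrightarrow>
        measure_pmf.prob (pmf_of_set (samples P s))
          {S. pop_mean P f > p P S f a b \<delta>} \<le> \<delta>)"

definition pac_lower ::
  "('a set \<Rightarrow> 'a set \<Rightarrow> ('a \<Rightarrow> real) \<Rightarrow> real \<Rightarrow> real \<Rightarrow> real \<Rightarrow> real) \<Rightarrow> bool" where
  "pac_lower p \<longleftrightarrow>
     (\<forall>P s f a b \<delta>. finite P \<and> s \<le> card P \<and> a \<le> b \<and> \<delta> > 0 \<and>
        (\<forall>x\<in>P. a \<le> f x \<and> f x \<le> b) \<longrightarrow>
        measure_pmf.prob (pmf_of_set (samples P s))
          {S. pop_mean P f < p P S f a b \<delta>} \<le> \<delta>)"

definition row :: "('a \<times> 'b) set \<Rightarrow> 'a \<Rightarrow> ('a \<times> 'b) set" where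
  "row M x = {q \<in> M. fst q = x}"

definition rowrecall :: "('a \<times> 'b) set \<Rightarrow> ('a \<times> 'b) set \<Rightarrow> 'a \<Rightarrow> real" where
  "rowrecall N M x = real (card (row N x \<inter> row M x)) / real (card (row M x))"

definition query_recall :: "'a set \<Rightarrow> ('a \<times> 'b) set \<Rightarrow> ('a \<times> 'b) set \<Rightarrow> real" where
  "query_recall X N M =
     (let X' = {x \<in> X. row M x \<noteq> {}} in (\<Sum>x\<in>X'. rowrecall N M x) / real (card X'))"

end

theory Submission
  imports Defs
begin

(* On the event where all three PAC bounds hold, the claim is a deterministic inequality: in each
   row the holdout recall exceeds the recall of Mhat S by at most d_r, and the mean of d_r over X'
   is its mean over X rescaled by |X|/|X'|, which the third bound controls. A union bound then gives probability 1 - 3 delta. The sample S \<inter> X' has random size, but conditioned on its size k it is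
   uniform on the k-subsets of X', so the PAC rule can be applied for each k separately. The bound
   on d_r is applied to S' with S fixed, since Mhat S depends on S only. *)

lemma finite_samples: "finite P \<Longrightarrow> finite (samples P k)"
  unfolding samples_def by (rule finite_subset[of _ "Pow P"]) auto

lemma samples_nonempty: "finite P \<Longrightarrow> k \<le> card P \<Longrightarrow> samples P k \<noteq> {}"
  by (metis (mono_tags) empty_iff mem_Collect_eq obtain_subset_with_card_n samples_def)

lemma card_samples_Int_eq:
  assumes "finite X" "X' \<subseteq> X" "T \<subseteq> X'"
  shows "card {S\<in>samples X s. S \<inter> X' = T} =
         (if card T \<le> s then card (X - X') choose (s - card T) else 0)"
proof (cases "card T \<le> s")
  case True
  have "bij_betw (\<lambda>U. T \<union> U) (samples (X - X') (s - card T)) {S\<in>samples X s. S \<inter> X' = T}"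
  proof (rule bij_betw_byWitness[where f'="\<lambda>S. S - X'"])
    show "\<forall>U\<in>samples (X - X') (s - card T). T \<union> U - X' = U"
      using assms(3) by (auto simp: samples_def)
    show "(\<lambda>U. T \<union> U) ` samples (X - X') (s - card T) \<subseteq> {S\<in>samples X s. S \<inter> X' = T}"
    proof clarify
      fix U assume "U \<in> samples (X - X') (s - card T)"
      then have U: "U \<subseteq> X - X'" "card U = s - card T" by (auto simp: samples_def)
      have "card (T \<union> U) = card T + card U"
        using assms U by (intro card_Un_disjoint) (auto intro: finite_subset)
      with U True have "card (T \<union> U) = s" by simp
      then show "T \<union> U \<in> samples X s \<and> (T \<union> U) \<inter> X' = T"
        using assms U by (auto simp: samples_def)
    qed
    show "\<forall>S\<in>{S\<in>samples X s. S \<inter> X' = T}. T \<union> (S - X') = S" by blast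
    show "(\<lambda>S. S - X') ` {S\<in>samples X s. S \<inter> X' = T} \<subseteq> samples (X - X') (s - card T)"
    proof clarify
      fix S assume "S \<in> samples X s"
      then have S: "S \<subseteq> X" "card S = s" by (auto simp: samples_def)
      then have "finite S" using finite_subset assms(1) by blast
      with S show "S - X' \<in> samples (X - X') (s - card (S \<inter> X'))"
        by (auto simp: samples_def card_Diff_subset_Int)
    qed
  qed
  then have "card {S\<in>samples X s. S \<inter> X' = T} = card (samples (X - X') (s - card T))"
    by (rule bij_betw_same_card[symmetric])
  also have "\<dots> = card (X - X') choose (s - card T)"
    using assms(1) by (simp add: samples_def n_subsets)
  finally show ?thesis using True by simp
next
  case False
  have "card T \<le> s" if "S \<in> samples X s" "S \<inter> X' = T" for S
  proof -
    from that have "S \<subseteq> X" "card S = s" by (auto simp: samples_def)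
    then show ?thesis
      using that(2) assms(1) by (metis card_mono finite_subset inf_le1)
  qed
  then have "{S\<in>samples X s. S \<inter> X' = T} = {}" using False by blast
  then show ?thesis using False by (simp only: card.empty if_False)
qed

lemma card_samples_restrict:
  assumes "finite X" "X' \<subseteq> X"
  shows "card {S\<in>samples X s. Q (S \<inter> X')} =
    (\<Sum>k\<le>card X'. (if k \<le> s then card (X - X') choose (s - k) else 0) * card {T\<in>samples X' k. Q T})"
proof -
  define h where "h k = (if k \<le> s then card (X - X') choose (s - k) else 0)" for k
  define \<T> where "\<T> = {T. T \<subseteq> X' \<and> Q T}"
  have "finite X'" using assms finite_subset by blast
  then have fin: "finite \<T>" unfolding \<T>_def by (simp add: finite_subset[of _ "Pow X'"])
  have "{S\<in>samples X s. Q (S \<inter> X')} = (\<Union>T\<in>\<T>. {S\<in>samples X s. S \<inter> X' = T})"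
    unfolding \<T>_def by auto
  then have "card {S\<in>samples X s. Q (S \<inter> X')} = (\<Sum>T\<in>\<T>. card {S\<in>samples X s. S \<inter> X' = T})"
    using fin finite_samples[OF assms(1)] by (auto intro: card_UN_disjoint)
  also have "\<dots> = (\<Sum>T\<in>\<T>. h (card T))"
    using assms by (intro sum.cong refl) (simp add: card_samples_Int_eq h_def \<T>_def)
  also have "\<dots> = (\<Sum>k\<le>card X'. \<Sum>T\<in>{T\<in>\<T>. card T = k}. h (card T))"
    using \<open>finite X'\<close> by (intro sum.group[symmetric] fin) (auto simp: \<T>_def card_mono)
  also have "\<dots> = (\<Sum>k\<le>card X'. h k * card {T\<in>samples X' k. Q T})"
    by (intro sum.cong refl) (simp add: \<T>_def samples_def conj_ac)
  finally show ?thesis unfolding h_def .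
qed

lemma measure_pmf_of_samples:
  assumes "finite P" "k \<le> card P"
  shows "measure (pmf_of_set (samples P k)) {S. Q S} =
    real (card {S\<in>samples P k. Q S}) / real (card (samples P k))"
  using finite_samples[OF assms(1)] samples_nonempty[OF assms]
  by (simp add: measure_pmf_of_set Int_def conj_commute)

lemma prob_samples_restrict_le:
  assumes "finite X" "X' \<subseteq> X" "s \<le> card X"
    and bad: "\<And>k. k \<le> card X' \<Longrightarrow> measure (pmf_of_set (samples X' k)) {T. Q T} \<le> \<delta>"
  shows "measure (pmf_of_set (samples X s)) {S. Q (S \<inter> X')} \<le> \<delta>"
proof -
  define h where "h k = real (if k \<le> s then card (X - X') choose (s - k) else 0)" for k
  have "finite X'" using assms finite_subset by blast
  have pos: "0 < real (card (samples P k))" if "finite P" "k \<le> card P" for P :: "'a set" and k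
    using finite_samples[OF that(1)] samples_nonempty[OF that] by (simp add: card_gt_0_iff)
  have bad_card: "card {T\<in>samples X' k. Q T} \<le> \<delta> * card (samples X' k)" if "k \<le> card X'" for k
    using bad[OF that] pos[OF \<open>finite X'\<close> that]
    by (simp add: measure_pmf_of_samples[OF \<open>finite X'\<close> that] divide_le_eq)
  have "real (card {S\<in>samples X s. Q (S \<inter> X')}) = (\<Sum>k\<le>card X'. h k * card {T\<in>samples X' k. Q T})"
    unfolding card_samples_restrict[OF assms(1,2)] h_def by simp
  also have "\<dots> \<le> (\<Sum>k\<le>card X'. h k * (\<delta> * card (samples X' k)))"
    by (intro sum_mono mult_left_mono bad_card) (auto simp: h_def)
  also have "\<dots> = \<delta> * card (samples X s)"
    using card_samples_restrict[OF assms(1,2), of s "\<lambda>_. True"]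
    by (simp add: h_def sum_distrib_left mult_ac)
  finally show ?thesis
    using pos[OF assms(1,3)] by (simp add: measure_pmf_of_samples[OF assms(1,3)] divide_le_eq)
qed

lemma measure_pmf_ge_union_bound:
  fixes p :: "'a pmf"
  assumes "UNIV - G \<subseteq> A \<union> B \<union> C" "measure p A \<le> a" "measure p B \<le> b" "measure p C \<le> c"
  shows "measure p G \<ge> 1 - (a + b + c)"
proof -
  have "measure p (UNIV - G) \<le> measure p (A \<union> B \<union> C)"
    using assms(1) by (intro measure_pmf.finite_measure_mono) auto
  also have "\<dots> \<le> measure p A + measure p B + measure p C"
    using measure_Un_le[of "A \<union> B" p C] measure_Un_le[of A p B] by simp
  finally show ?thesis
    using assms(2-4) measure_pmf.prob_compl[of G p] by simp
qed

lemma pac_lowerD: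
  assumes "pac_lower p" "finite P" "k \<le> card P" "a \<le> b" "\<delta> > 0" "\<And>x. x \<in> P \<Longrightarrow> a \<le> f x \<and> f x \<le> b"
  shows "measure (pmf_of_set (samples P k)) {S. pop_mean P f < p P S f a b \<delta>} \<le> \<delta>"
  using assms unfolding pac_lower_def by blast

lemma pac_upperD:
  assumes "pac_upper p" "finite P" "k \<le> card P" "a \<le> b" "\<delta> > 0" "\<And>x. x \<in> P \<Longrightarrow> a \<le> f x \<and> f x \<le> b"
  shows "measure (pmf_of_set (samples P k)) {S. pop_mean P f > p P S f a b \<delta>} \<le> \<delta>"
  using assms unfolding pac_upper_def by blast

lemma measure_pair_pmf_le:
  fixes p :: "'a pmf" and q :: "'b pmf"
  assumes "\<And>a. a \<in> set_pmf p \<Longrightarrow> measure q {b. (a, b) \<in> A} \<le> c"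
  shows "measure (pair_pmf p q) A \<le> c"
proof -
  obtain a where "a \<in> set_pmf p" using set_pmf_not_empty by fast
  then have "c \<ge> 0" using assms[of a] by (meson measure_nonneg order_trans)
  have "emeasure (pair_pmf p q) A = (\<integral>\<^sup>+x. indicator A x \<partial>pair_pmf p q)"
    by simp
  also have "\<dots> = (\<integral>\<^sup>+a. \<integral>\<^sup>+b. indicator {b. (a, b) \<in> A} b \<partial>q \<partial>p)"
    unfolding nn_integral_pair_pmf' by (simp add: indicator_def)
  also have "\<dots> = (\<integral>\<^sup>+a. ennreal (measure q {b. (a, b) \<in> A}) \<partial>p)"
    by (simp add: measure_pmf.emeasure_eq_measure)
  also have "\<dots> \<le> (\<integral>\<^sup>+a. ennreal c \<partial>p)"
    using assms by (intro nn_integral_mono_AE) (simp add: AE_measure_pmf_iff ennreal_leI)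
  also have "\<dots> = ennreal c" by simp
  finally show ?thesis
    using \<open>c \<ge> 0\<close> by (simp add: measure_pmf.emeasure_eq_measure)
qed

lemma measure_pair_pmf_Times_UNIV: "measure (pair_pmf p q) (A \<times> UNIV) = measure p A"
proof -
  have "measure (pair_pmf p q) (A \<times> UNIV) = measure (map_pmf fst (pair_pmf p q)) A"
    by (simp add: vimage_fst)
  then show ?thesis by (simp only: map_fst_pair_pmf)
qed

lemma rowrecall_nonneg: "0 \<le> rowrecall N M x"
  unfolding rowrecall_def by simp

lemma rowrecall_le_1: "rowrecall N M x \<le> 1"
proof (cases "finite (row M x)")
  case True
  then have "card (row N x \<inter> row M x) \<le> card (row M x)" by (intro card_mono) auto
  then show ?thesis unfolding rowrecall_def by (auto simp: divide_le_eq_1)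
qed (simp add: rowrecall_def)

lemma rowrecall_mono:
  assumes "row N x \<subseteq> row N' x"
  shows "rowrecall N M x \<le> rowrecall N' M x"
proof (cases "finite (row M x)")
  case True
  then have "card (row N x \<inter> row M x) \<le> card (row N' x \<inter> row M x)"
    using assms by (intro card_mono) auto
  then show ?thesis unfolding rowrecall_def by (simp add: divide_right_mono)
qed (simp add: rowrecall_def)

lemma rowrecall_diff_le:
  "rowrecall MH M x - rowrecall N M x \<le> (if row MH x - row N x \<noteq> {} then 1 else 0)"
  using rowrecall_mono[of MH x N M] rowrecall_le_1[of MH M x] rowrecall_nonneg[of N M x] by auto

lemma query_recall_lower_bound:
  fixes N MH M :: "('a \<times> 'b) set"
  assumes "finite X"
    and X': "X' = {x \<in> X. row M x \<noteq> {}}" "X' \<noteq> {}"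
    and L: "L \<le> pop_mean X' (rowrecall MH M)"
    and U: "pop_mean X (\<lambda>x. if row MH x - row N x \<noteq> {} then 1 else 0) \<le> U"
    and den: "0 < den" "den \<le> pop_mean X (\<lambda>x. if x \<in> X' then 1 else 0)"
  shows "L - U / den \<le> query_recall X N M"
proof -
  define d where "d x = (if row MH x - row N x \<noteq> {} then 1 else 0 :: real)" for x
  define m where "m = real (card X')"
  define n where "n = real (card X)"
  define D where "D = (\<Sum>x\<in>X. d x)"
  have "X' \<subseteq> X" using X' by auto
  then have "finite X'" using assms(1) finite_subset by blast
  have "0 < m" using \<open>finite X'\<close> X'(2) by (simp add: m_def card_gt_0_iff)
  have "m \<le> n" using card_mono[OF assms(1) \<open>X' \<subseteq> X\<close>] by (simp add: m_def n_def)
  have "(\<Sum>x\<in>X'. rowrecall MH M x) - (\<Sum>x\<in>X'. rowrecall N M x) \<le> (\<Sum>x\<in>X'. d x)"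
    unfolding sum_subtractf[symmetric] d_def by (intro sum_mono rowrecall_diff_le)
  also have "\<dots> \<le> D"
    unfolding D_def using assms(1) \<open>X' \<subseteq> X\<close> by (intro sum_mono2) (auto simp: d_def)
  finally have miss: "(\<Sum>x\<in>X'. rowrecall MH M x) / m - D / m \<le> (\<Sum>x\<in>X'. rowrecall N M x) / m"
    using \<open>0 < m\<close> by (simp add: diff_divide_distrib[symmetric] divide_right_mono)
  have "(\<Sum>x\<in>X. if x \<in> X' then 1 else 0 :: real) = m"
    using assms(1) \<open>X' \<subseteq> X\<close> by (simp add: m_def sum.If_cases Int_absorb1)
  then have "den \<le> m / n" using den(2) by (simp add: pop_mean_def n_def)
  then have "n / m \<le> 1 / den" using den(1) \<open>0 < m\<close> \<open>m \<le> n\<close> by (simp add: field_simps)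
  moreover have "0 \<le> D / n" by (simp add: D_def d_def n_def sum_nonneg)
  ultimately have "D / m \<le> (D / n) / den"
    using \<open>0 < m\<close> \<open>m \<le> n\<close> mult_left_mono[of "n / m" "1 / den" "D / n"] by simp
  also have "\<dots> \<le> U / den"
    using U den(1) by (intro divide_right_mono) (simp_all add: pop_mean_def D_def d_def n_def)
  finally show ?thesis
    using L miss by (simp add: query_recall_def X'(1)[symmetric] pop_mean_def m_def)
qed

theorem theorem5:
  fixes X :: "'a set" and Y :: "'b set"
    and M MH :: "('a \<times> 'b) set"
    and Mhat :: "'a set \<Rightarrow> ('a \<times> 'b) set"
    and pplus pminus :: "'a set \<Rightarrow> 'a set \<Rightarrow> ('a \<Rightarrow> real) \<Rightarrow> real \<Rightarrow> real \<Rightarrow> real \<Rightarrow> real"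
    and s s' :: nat and \<delta> :: real
  assumes "finite X" and "finite Y"
    and "M \<subseteq> X \<times> Y" and "MH \<subseteq> X \<times> Y"
    and "\<And>S. Mhat S \<subseteq> X \<times> Y"
    and "{x \<in> X. row M x \<noteq> {}} \<noteq> {}"
    and "s \<le> card X" and "s' \<le> card X"
    and "pac_upper pplus" and "pac_lower pminus"
    and "\<delta> > 0"
  shows "measure_pmf.prob
           (pair_pmf (pmf_of_set (samples X s)) (pmf_of_set (samples X s')))
           {(S, S'). let X' = {x \<in> X. row M x \<noteq> {}};
                         dr = (\<lambda>x. if row MH x - row (Mhat S) x \<noteq> {} then 1 else 0 :: real);
                         den = pminus X S (\<lambda>x. if x \<in> X' then 1 else 0) 0 1 \<delta>
                     in den > 0 \<longrightarrow>
                        query_recall X (Mhat S) M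
                          \<ge> pminus X' (S \<inter> X') (rowrecall MH M) 0 1 \<delta>
                             - pplus X S' dr 0 1 \<delta> / den}
         \<ge> 1 - 3 * \<delta>"
  (is "measure_pmf.prob ?p ?G \<ge> _")
proof -
  define X' where "X' = {x \<in> X. row M x \<noteq> {}}"
  define ind where "ind x = (if x \<in> X' then 1 else 0 :: real)" for x
  define dr where "dr S x = (if row MH x - row (Mhat S) x \<noteq> {} then 1 else 0 :: real)" for S x
  define E1 :: "('a set \<times> 'a set) set" where
    "E1 = {S. pop_mean X' (rowrecall MH M) < pminus X' (S \<inter> X') (rowrecall MH M) 0 1 \<delta>} \<times> UNIV"
  define E2 :: "('a set \<times> 'a set) set" where
    "E2 = {z. pop_mean X (dr (fst z)) > pplus X (snd z) (dr (fst z)) 0 1 \<delta>}"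
  define E3 :: "('a set \<times> 'a set) set" where
    "E3 = {S. pop_mean X ind < pminus X S ind 0 1 \<delta>} \<times> UNIV"
  have "X' \<subseteq> X" "finite X'" using assms(1) finite_subset unfolding X'_def by auto
  have E1: "measure ?p E1 \<le> \<delta>"
    unfolding E1_def measure_pair_pmf_Times_UNIV
    by (intro prob_samples_restrict_le[OF assms(1) \<open>X' \<subseteq> X\<close> assms(7)]
        pac_lowerD[OF assms(10) \<open>finite X'\<close>]) (simp_all add: assms(11) rowrecall_nonneg rowrecall_le_1)
  have E2: "measure ?p E2 \<le> \<delta>"
    unfolding E2_def using pac_upperD[OF assms(9,1,8)] assms(11)
    by (intro measure_pair_pmf_le) (simp add: dr_def)
  have E3: "measure ?p E3 \<le> \<delta>"
    unfolding E3_def measure_pair_pmf_Times_UNIV using pac_lowerD[OF assms(10,1,7)] assms(11)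
    by (simp add: ind_def)
  have "(S, S') \<in> ?G" if "(S, S') \<notin> E1 \<union> E2 \<union> E3" for S S'
  proof -
    from that have "pminus X' (S \<inter> X') (rowrecall MH M) 0 1 \<delta> \<le> pop_mean X' (rowrecall MH M)"
      "pop_mean X (dr S) \<le> pplus X S' (dr S) 0 1 \<delta>" "pminus X S ind 0 1 \<delta> \<le> pop_mean X ind"
      by (auto simp: E1_def E2_def E3_def not_less)
    note bound = this[unfolded dr_def ind_def]
    show ?thesis
      using query_recall_lower_bound[OF assms(1) X'_def assms(6)[folded X'_def] bound(1,2) _ bound(3)]
      by (auto simp: Let_def X'_def)
  qed
  then have "UNIV - ?G \<subseteq> E1 \<union> E2 \<union> E3" by auto
  from measure_pmf_ge_union_bound[OF this E1 E2 E3] show ?thesis by simp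
qed

end
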